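(* Let $1\le t_1<t_2$ and $n\ge t_1+t_2$ be integers, and let $G=G_n\langle t_1,t_2\rangle$. If $t_2\ne 2t_1$, then $G$ contains a hole of length $(t_1+t_2)/\gcd(t_1,t_2)$.
   Context: For integers $n\ge 2$, $k\ge 1$ and $1\le t_1<t_2<\cdots<t_k\le n-1$, the Toeplitz graph $G_n\langle t_1,\ldots,t_k\rangle$ is the simple graph with vertex set $[n]=\{1,\ldots,n\}$ in which two distinct vertices $i,j$ are adjacent if and only if $|i-j|\in\{t_1,\ldots,t_k\}$. A hole is an induced (chordless) cycle of length at least $4$. *)

theory Defs
  imports Main
begin

definition toeplitz_adj :: "nat \<Rightarrow> nat set \<Rightarrow> nat \<Rightarrow> nat \<Rightarrow> bool" where
  "toeplitz_adj n T i j \<longleftrightarrow> i \<in> {1..n} \<and> j \<in> {1..n} \<and> i \<noteq> j \<and>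
     (if i \<le> j then j - i else i - j) \<in> T"

definition is_hole :: "'a set \<Rightarrow> ('a \<Rightarrow> 'a \<Rightarrow> bool) \<Rightarrow> 'a list \<Rightarrow> bool" where
  "is_hole V E vs \<longleftrightarrow> length vs \<ge> 4 \<and> distinct vs \<and> set vs \<subseteq> V \<and>
     (\<forall>i<length vs. \<forall>j<length vs.
        E (vs ! i) (vs ! j) \<longleftrightarrow> (j = (i + 1) mod length vs \<or> i = (j + 1) mod length vs))"

definition has_hole_of_length :: "'a set \<Rightarrow> ('a \<Rightarrow> 'a \<Rightarrow> bool) \<Rightarrow> nat \<Rightarrow> bool" where
  "has_hole_of_length V E L \<longleftrightarrow> (\<exists>vs. is_hole V E vs \<and> length vs = L)"

end

theory Submission
  imports Defs "HOL-Number_Theory.Cong"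
begin

text \<open>Put \<open>m = t\<^sub>1 + t\<^sub>2\<close> and \<open>L = m / gcd t\<^sub>1 t\<^sub>2\<close>. Walking from vertex 1 in steps of \<open>+t\<^sub>1\<close>
  modulo \<open>m\<close> (realised as \<open>+t\<^sub>1\<close> or \<open>-t\<^sub>2\<close>) visits the vertices \<open>1 + k t\<^sub>1 mod m\<close>,
  \<open>k < L\<close>, and returns to 1 after exactly \<open>L\<close> steps. Inside \<open>{1..m}\<close> two vertices are
  adjacent iff their residues differ by \<open>\<plusminus>t\<^sub>1\<close> modulo \<open>m\<close>, i.e. iff their indices differ
  by \<open>\<plusminus>1\<close> modulo \<open>L\<close>; so the walk is an induced cycle, and \<open>t\<^sub>2 \<noteq> 2t\<^sub>1\<close> is exactly
  what excludes \<open>L = 3\<close>.\<close>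

lemma cong_mult_left_iff_cong_div_gcd:
  fixes a x y m :: nat
  assumes "m > 0"
  shows "[a * x = a * y] (mod m) \<longleftrightarrow> [x = y] (mod m div gcd a m)"
proof -
  define d where "d = gcd a m"
  have "d > 0" using assms by (simp add: d_def)
  obtain a' m' where a: "a = a' * d" and m: "m = m' * d" and "coprime a' m'"
    using gcd_coprime_exists[of a m] \<open>d > 0\<close> unfolding d_def by blast
  have scale: "a * z mod m = (a' * z mod m') * d" for z
    using mod_mult_mult2[of "a' * z" d m'] by (simp add: a m ac_simps)
  have "[a * x = a * y] (mod m) \<longleftrightarrow> [a' * x = a' * y] (mod m')"
    using \<open>d > 0\<close> by (simp add: cong_def scale)
  also have "\<dots> \<longleftrightarrow> [x = y] (mod m')"
    using \<open>coprime a' m'\<close> by (rule cong_mult_lcancel_nat)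
  also have "m' = m div gcd a m"
    using \<open>d > 0\<close> unfolding d_def[symmetric] by (simp add: m)
  finally show ?thesis .
qed

lemma mult_mod_sum_eq_iff:
  fixes t1 t2 x y :: nat
  assumes "0 < t1"
  shows "x * t1 mod (t1 + t2) = y * t1 mod (t1 + t2) \<longleftrightarrow>
         x mod ((t1 + t2) div gcd t1 t2) = y mod ((t1 + t2) div gcd t1 t2)"
  using cong_mult_left_iff_cong_div_gcd[of "t1 + t2" t1 x y] assms
  by (simp add: cong_def gcd_add2 ac_simps)

lemma absdiff_in_pair_iff_mod_shift:
  fixes r s t1 t2 :: nat
  assumes "r < t1 + t2" "s < t1 + t2" "0 < t1" "0 < t2"
  shows "(r \<noteq> s \<and> (if r \<le> s then s - r else r - s) \<in> {t1, t2}) \<longleftrightarrow>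
         (s = (r + t1) mod (t1 + t2) \<or> r = (s + t1) mod (t1 + t2))"
proof -
  have wrap: "x mod (t1 + t2) = (if x < t1 + t2 then x else x - (t1 + t2))"
    if "x < 2 * (t1 + t2)" for x
    using that by (simp add: le_mod_geq)
  show ?thesis
    using assms wrap[of "r + t1"] wrap[of "s + t1"] by auto
qed

lemma hole_length_ge_4:
  fixes t1 t2 :: nat
  assumes "0 < t1" "t1 < t2" "t2 \<noteq> 2 * t1"
  shows "4 \<le> (t1 + t2) div gcd t1 t2"
proof -
  define d where "d = gcd t1 t2"
  obtain a b where a: "t1 = a * d" and b: "t2 = b * d"
    by (metis d_def dvd_div_mult_self gcd_dvd1 gcd_dvd2)
  have "d > 0" using assms by (simp add: d_def)
  have "1 \<le> a" "a < b" "\<not> (a = 1 \<and> b = 2)"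
    using assms \<open>d > 0\<close> by (auto simp: a b)
  then have "4 \<le> a + b" by (cases "a = 1") auto
  also have "a + b = (t1 + t2) div d"
    using \<open>d > 0\<close> by (simp add: a b add_mult_distrib[symmetric])
  finally show ?thesis by (simp add: d_def)
qed

definition toeplitz_cycle :: "nat \<Rightarrow> nat \<Rightarrow> nat list" where
  "toeplitz_cycle t1 t2 =
     map (\<lambda>k. 1 + k * t1 mod (t1 + t2)) [0..<(t1 + t2) div gcd t1 t2]"

lemma length_toeplitz_cycle:
  "length (toeplitz_cycle t1 t2) = (t1 + t2) div gcd t1 t2"
  by (simp add: toeplitz_cycle_def)

lemma nth_toeplitz_cycle:
  "k < (t1 + t2) div gcd t1 t2 \<Longrightarrow> toeplitz_cycle t1 t2 ! k = 1 + k * t1 mod (t1 + t2)"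
  by (simp add: toeplitz_cycle_def)

lemma set_toeplitz_cycle:
  assumes "0 < t1"
  shows "set (toeplitz_cycle t1 t2) \<subseteq> {1..t1 + t2}"
proof
  fix v assume "v \<in> set (toeplitz_cycle t1 t2)"
  then obtain k where "v = 1 + k * t1 mod (t1 + t2)"
    by (auto simp: toeplitz_cycle_def)
  then show "v \<in> {1..t1 + t2}"
    using assms mod_less_divisor[of "t1 + t2" "k * t1"] by (simp add: Suc_le_eq)
qed

lemma distinct_toeplitz_cycle:
  assumes "0 < t1"
  shows "distinct (toeplitz_cycle t1 t2)"
  unfolding toeplitz_cycle_def distinct_map
  by (auto intro!: inj_onI simp: mult_mod_sum_eq_iff[OF assms])

lemma toeplitz_adj_toeplitz_cycle:
  fixes n t1 t2 i j :: nat
  defines "L \<equiv> (t1 + t2) div gcd t1 t2"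
  defines "vs \<equiv> toeplitz_cycle t1 t2"
  assumes "0 < t1" "0 < t2" "t1 + t2 \<le> n" "i < L" "j < L"
  shows "toeplitz_adj n {t1, t2} (vs ! i) (vs ! j) \<longleftrightarrow> j = (i + 1) mod L \<or> i = (j + 1) mod L"
proof -
  define m where "m = t1 + t2"
  define r where "r = i * t1 mod m"
  define s where "s = j * t1 mod m"
  have "r < m" "s < m" using assms by (auto simp: m_def r_def s_def)
  have shift: "(x * t1 mod m + t1) mod m = Suc x * t1 mod m" for x
    by (metis mod_add_left_eq mult_Suc add.commute)
  have index: "z * t1 mod m = Suc x * t1 mod m \<longleftrightarrow> z = Suc x mod L" if "z < L" for x z
    using mult_mod_sum_eq_iff[of t1 z t2 "Suc x"] assms that by (simp add: m_def L_def)
  have "vs ! i = 1 + r" "vs ! j = 1 + s"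
    using assms by (auto simp: vs_def L_def m_def r_def s_def nth_toeplitz_cycle)
  then have "toeplitz_adj n {t1, t2} (vs ! i) (vs ! j) \<longleftrightarrow>
             r \<noteq> s \<and> (if r \<le> s then s - r else r - s) \<in> {t1, t2}"
    using \<open>r < m\<close> \<open>s < m\<close> assms by (auto simp: toeplitz_adj_def m_def)
  also have "\<dots> \<longleftrightarrow> s = (r + t1) mod m \<or> r = (s + t1) mod m"
    using absdiff_in_pair_iff_mod_shift \<open>r < m\<close> \<open>s < m\<close> assms by (simp add: m_def)
  also have "\<dots> \<longleftrightarrow> j = (i + 1) mod L \<or> i = (j + 1) mod L"
    using index[of j i] index[of i j] assms by (simp add: r_def s_def shift)
  finally show ?thesis .
qed

theorem lemma3p2:
  fixes n t1 t2 :: nat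
  assumes "1 \<le> t1" and "t1 < t2" and "n \<ge> t1 + t2" and "t2 \<noteq> 2 * t1"
  shows "has_hole_of_length {1..n} (toeplitz_adj n {t1, t2}) ((t1 + t2) div gcd t1 t2)"
proof -
  let ?vs = "toeplitz_cycle t1 t2"
  have "0 < t1" "0 < t2" using assms by auto
  have "set ?vs \<subseteq> {1..n}"
    using set_toeplitz_cycle[OF \<open>0 < t1\<close>, of t2] assms by auto
  then have "is_hole {1..n} (toeplitz_adj n {t1, t2}) ?vs"
    using hole_length_ge_4 distinct_toeplitz_cycle toeplitz_adj_toeplitz_cycle
      \<open>0 < t1\<close> \<open>0 < t2\<close> assms
    unfolding is_hole_def length_toeplitz_cycle by simp
  then show ?thesis
    unfolding has_hole_of_length_def using length_toeplitz_cycle by blast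
qed

end
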